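(* Let $P$ and $Q$ be distributions on $\mathcal{X}\times\{0,1\}$, and let $(X_1,Y_1),\dots,(X_m,Y_m)\stackrel{iid}{\sim}P$ and $X_{m+1},\dots,X_{m+n}\stackrel{iid}{\sim}Q_X$ be independent samples. Assume (A), (B), (C) below hold, and that $\widehat\eta_P$ (computed from $(X_1,Y_1),\dots,(X_m,Y_m)$) is a $(\delta_m,\tau_m)$-accurate estimator of $\eta_P$. Let $\widehat t_{P,Q,\alpha}$ be the $\lfloor n(1-\alpha)\rfloor$-th smallest value among $\widehat\eta_P(X_{m+1}),\dots,\widehat\eta_P(X_{m+n})$ and $\widehat G_{P,Q,\alpha}=\{x:\widehat\eta_P(x)\ge\widehat t_{P,Q,\alpha}\}$. Then for each $r>0$ there exists a positive constant $c$ such that, for $m$ and $n$ large enough, with probability at least $1-\tau_m-n^{-r}$ with respect to the draw of the two samples, $$Q_X(\widehat G_{P,Q,\alpha}\,\Delta\,G_{P,Q,\alpha})\le c\Big\{\delta_m^\kappa+\Big(\frac{\log n}{n}\Big)^{1/2}\Big\}.$$ Assumptions: (A) there exists $t_{P,Q,\alpha}\in(0,1]$ with $Q_X(\{x:\eta_P(x)\ge t_{P,Q,\alpha}\})=\alpha$; (B) there are positive constants $\delta_0,b_1,b_2,\kappa$ such that for all $\delta\in[-\delta_0,\delta_0]$, $b_1|\delta|^\kappa\le|F_{P,Q}(t_{P,Q,\alpha}+\delta)-F_{P,Q}(t_{P,Q,\alpha})|\le b_2|\delta|^\kappa$; (C) the support of $Q_X$ is contained in the support of $P_X$.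
   Context: $\mathcal{X}$ is a compact subset of $\mathbb{R}^d$. For a distribution $P$ of $(X,Y)\in\mathcal{X}\times\{0,1\}$, $P_X$ is the marginal of $X$ and $\eta_P(x)=P(Y=1\mid X=x)$; similarly $Q_X$, $\eta_Q$ for $Q$. All class-conditional distributions have densities w.r.t. a common dominating measure. $\alpha\in(0,1)$ is fixed. $F_{P,Q}(t)=Q_X(\{x:\eta_P(x)\le t\})$. Under (A) and (B), $t_{P,Q,\alpha}$ is unique and $G_{P,Q,\alpha}=\{x:\eta_P(x)\ge t_{P,Q,\alpha}\}$. For sequences of positive reals $\delta_m,\tau_m\to0$, an estimator $\widehat\eta_P$ of $\eta_P$ based on $m$ iid samples from $P$ is $(\delta_m,\tau_m)$-accurate if $P^m(\|\widehat\eta_P-\eta_P\|_\infty\ge\delta_m)\le\tau_m$ for all sufficiently large $m$, where $P^m$ is the product measure. $G\Delta G'$ denotes symmetric difference. *)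

theory Defs
  imports "HOL-Probability.Probability"
begin

definition marginal :: "('a::topological_space \<times> bool) measure \<Rightarrow> 'a measure" where
  "marginal M = distr M borel fst"

text \<open>eta is (a version of) the regression function x \<mapsto> M(Y = 1 | X = x).\<close>
definition is_regression_fn :: "('a::topological_space \<times> bool) measure \<Rightarrow> ('a \<Rightarrow> real) \<Rightarrow> bool" where
  "is_regression_fn M eta \<longleftrightarrow>
     eta \<in> borel_measurable borel \<and> (\<forall>x. 0 \<le> eta x \<and> eta x \<le> 1) \<and>
     (\<forall>A \<in> sets borel. measure M (A \<times> {True}) = (LINT x:A|marginal M. eta x))"

definition F_PQ :: "'a measure \<Rightarrow> ('a \<Rightarrow> real) \<Rightarrow> real \<Rightarrow> real" where
  "F_PQ QX eta t = measure QX {x. eta x \<le> t}"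

definition msupport :: "'a::metric_space measure \<Rightarrow> 'a set" where
  "msupport M = {x. \<forall>e>0. emeasure M (ball x e) > 0}"

definition sup_dist :: "'a set \<Rightarrow> ('a \<Rightarrow> real) \<Rightarrow> ('a \<Rightarrow> real) \<Rightarrow> ereal" where
  "sup_dist A f g = (SUP x\<in>A. ereal \<bar>f x - g x\<bar>)"

text \<open>(delta_m, tau_m)-accuracy; probability of the bad event in the outer-measure sense
  (coincides with P^m of the event whenever it is measurable).\<close>
definition accurate ::
  "('a \<times> bool) measure \<Rightarrow> 'a set \<Rightarrow> (nat \<Rightarrow> (nat \<Rightarrow> 'a \<times> bool) \<Rightarrow> 'a \<Rightarrow> real)
    \<Rightarrow> ('a \<Rightarrow> real) \<Rightarrow> (nat \<Rightarrow> real) \<Rightarrow> (nat \<Rightarrow> real) \<Rightarrow> bool" where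
  "accurate P X etahat eta \<delta> \<tau> \<longleftrightarrow>
     (\<exists>M. \<forall>m\<ge>M. \<exists>E \<in> sets (PiM {..<m} (\<lambda>_. P)).
        {S \<in> space (PiM {..<m} (\<lambda>_. P)). sup_dist X (etahat m S) eta \<ge> ereal (\<delta> m)} \<subseteq> E
        \<and> measure (PiM {..<m} (\<lambda>_. P)) E \<le> \<tau> m)"

text \<open>k-th smallest element (1-indexed, counted with multiplicity) of a list.\<close>
definition kth_smallest :: "nat \<Rightarrow> real list \<Rightarrow> real" where
  "kth_smallest k xs = sort xs ! (k - 1)"

definition symdiff :: "'a set \<Rightarrow> 'a set \<Rightarrow> 'a set" where
  "symdiff A B = (A - B) \<union> (B - A)"

end

(*
  On an event of probability at least 1 - tau_m the estimator is delta_m-close to eta uniformly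
  on X, which carries all the mass of Q_X.  Choose u_n with b1 u_n^kappa of order
  sqrt (log n / n), so that by the lower margin bound the Q_X-masses of {eta <= t - u_n} and
  {eta <= t + u_n} lie on either side of 1 - alpha with room for a Hoeffding deviation and
  for the rounding in k = floor (n (1 - alpha)).  Hoeffding's inequality then gives,
  with probability at least 1 - n^-r, that fewer than k sample points fall into the first
  set and at least k into the second; hence the k-th smallest estimated value lies within
  u_n + delta_m of t.  A point of X can then be misclassified only if eta is within
  u_n + 2 delta_m of t, and by the upper margin bound this band has Q_X-mass at most
  2 b2 (u_n + 2 delta_m)^kappa.
*)

theory Submission
  imports Defs "HOL-Real_Asymp.Real_Asymp"
begin

section \<open>Order statistics\<close>

lemma length_filter_sort: "length (filter P (sort xs)) = length (filter P xs)"
  by (metis mset_filter mset_sort size_mset)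

lemma length_filter_map_upt: "length (filter P (map f [0..<n])) = card {i. i < n \<and> P (f i)}"
  unfolding length_filter_conv_card by (intro arg_cong[where f = card]) auto

lemma kth_smallest_le:
  fixes xs :: "real list"
  assumes "1 \<le> k" "k \<le> length (filter (\<lambda>y. y \<le> v) xs)"
  shows "kth_smallest k xs \<le> v"
proof (rule ccontr)
  assume "\<not> ?thesis"
  then have above: "v < sort xs ! (k - 1)"
    by (simp add: kth_smallest_def)
  have "length (filter (\<lambda>y. y \<le> v) xs) = length (filter (\<lambda>y. y \<le> v) (sort xs))"
    by (rule length_filter_sort[symmetric])
  also have "\<dots> = card {i. i < length (sort xs) \<and> sort xs ! i \<le> v}"
    by (rule length_filter_conv_card)
  also have "\<dots> \<le> card {..<k - 1}"
  proof (rule card_mono)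
    show "{i. i < length (sort xs) \<and> sort xs ! i \<le> v} \<subseteq> {..<k - 1}"
    proof (rule subsetI, rule ccontr)
      fix i assume i: "i \<in> {i. i < length (sort xs) \<and> sort xs ! i \<le> v}" "i \<notin> {..<k - 1}"
      then have "sort xs ! (k - 1) \<le> sort xs ! i"
        by (intro sorted_nth_mono) auto
      then show False
        using i above by simp
    qed
  qed simp
  finally show False
    using assms by simp
qed

lemma kth_smallest_ge:
  fixes xs :: "real list"
  assumes "k \<le> length xs" "length (filter (\<lambda>y. y < v) xs) < k"
  shows "v \<le> kth_smallest k xs"
proof (rule ccontr)
  assume "\<not> ?thesis"
  then have below: "sort xs ! (k - 1) < v"
    by (simp add: kth_smallest_def)
  have "k = card {..<k}"
    by simp
  also have "\<dots> \<le> card {i. i < length (sort xs) \<and> sort xs ! i < v}"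
  proof (rule card_mono)
    show "{..<k} \<subseteq> {i. i < length (sort xs) \<and> sort xs ! i < v}"
    proof
      fix i assume "i \<in> {..<k}"
      moreover from this have "sort xs ! i \<le> sort xs ! (k - 1)"
        using assms by (intro sorted_nth_mono) auto
      ultimately show "i \<in> {i. i < length (sort xs) \<and> sort xs ! i < v}"
        using assms below by auto
    qed
  qed simp
  also have "\<dots> = length (filter (\<lambda>y. y < v) (sort xs))"
    by (rule length_filter_conv_card[symmetric])
  also have "\<dots> = length (filter (\<lambda>y. y < v) xs)"
    by (rule length_filter_sort)
  finally show False
    using assms by simp
qed

lemma kth_smallest_perturbed_bounds:
  fixes f g :: "nat \<Rightarrow> real"
  assumes close: "\<forall>i<n. \<bar>f i - g i\<bar> < d"
    and many_below: "k \<le> card {i. i < n \<and> g i \<le> a}"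
    and few_below: "card {i. i < n \<and> g i \<le> b} < k"
  shows "b - d \<le> kth_smallest k (map f [0..<n])" "kth_smallest k (map f [0..<n]) \<le> a + d"
proof -
  have "card {i. i < n \<and> g i \<le> a} \<le> n"
    by (rule card_mono[of "{..<n}", simplified]) auto
  then have "k \<le> length (map f [0..<n])"
    using many_below by simp
  moreover have "card {i. i < n \<and> f i < b - d} \<le> card {i. i < n \<and> g i \<le> b}"
  proof (rule card_mono)
    show "{i. i < n \<and> f i < b - d} \<subseteq> {i. i < n \<and> g i \<le> b}"
      using close by fastforce
  qed simp
  ultimately show "b - d \<le> kth_smallest k (map f [0..<n])"
    using few_below by (intro kth_smallest_ge) (simp_all only: length_filter_map_upt)
  have "card {i. i < n \<and> g i \<le> a} \<le> card {i. i < n \<and> f i \<le> a + d}"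
  proof (rule card_mono)
    show "{i. i < n \<and> g i \<le> a} \<subseteq> {i. i < n \<and> f i \<le> a + d}"
      using close by fastforce
  qed simp
  then show "kth_smallest k (map f [0..<n]) \<le> a + d"
    using many_below few_below by (intro kth_smallest_le) (simp_all only: length_filter_map_upt)
qed

lemma powr_tendsto_zero_at_right:
  fixes c \<kappa> :: real
  assumes "0 < \<kappa>"
  shows "((\<lambda>d. c * d powr \<kappa>) \<longlongrightarrow> 0) (at_right 0)"
proof -
  have "((\<lambda>d. d powr \<kappa>) \<longlongrightarrow> 0) (at_right (0::real))"
  proof (rule tendsto_zero_powrI)
    show "\<forall>\<^sub>F d in at_right 0. 0 \<le> (d::real)"
      using eventually_at_right_less[of 0] by (rule eventually_mono) simp
  qed (use assms in \<open>auto intro: tendsto_ident_at\<close>)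
  then show ?thesis
    using tendsto_mult_right_zero by auto
qed

lemma sqrt_ln_over_tendsto_zero: "(\<lambda>n::nat. sqrt (ln n / n)) \<longlonglongrightarrow> 0"
  by real_asymp

lemma sqrt_ln_over_powr_tendsto_zero:
  fixes a \<kappa> :: real
  assumes "0 < \<kappa>" "0 \<le> a"
  shows "(\<lambda>n::nat. (a * sqrt (ln n / n)) powr (1 / \<kappa>)) \<longlonglongrightarrow> 0"
proof (rule tendsto_zero_powrI[where b = "1 / \<kappa>"])
  show "\<forall>\<^sub>F n in sequentially. 0 \<le> a * sqrt (ln (real n) / n)"
    unfolding eventually_sequentially using assms by (intro exI[of _ 1] allI impI mult_nonneg_nonneg) auto
qed (use assms in \<open>auto intro: tendsto_mult_right_zero sqrt_ln_over_tendsto_zero\<close>)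

lemma inverse_le_sqrt_ln_over:
  assumes "3 \<le> n"
  shows "1 / n \<le> sqrt (ln n / n)"
proof (rule real_le_rsqrt)
  have "1 \<le> ln n"
    using assms exp_le ln_ge_iff[of n 1] by simp
  then have "1 / n \<le> ln n / n"
    using assms by (simp add: divide_right_mono)
  moreover have "(1 / n)\<^sup>2 \<le> 1 / n"
    using assms by (simp add: power2_eq_square field_simps)
  ultimately show "(1 / n)\<^sup>2 \<le> ln n / n"
    by linarith
qed

lemma powr_add_twice_le:
  fixes a b \<kappa> :: real
  assumes "0 \<le> a" "0 \<le> b" "0 < \<kappa>"
  shows "(a + 2 * b) powr \<kappa> \<le> 3 powr \<kappa> * (a powr \<kappa> + b powr \<kappa>)"
proof -
  have "(a + 2 * b) powr \<kappa> \<le> (3 * max a b) powr \<kappa>"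
    using assms by (intro powr_mono2) auto
  also have "\<dots> = 3 powr \<kappa> * max a b powr \<kappa>"
    using assms by (simp add: powr_mult)
  also have "max a b powr \<kappa> \<le> a powr \<kappa> + b powr \<kappa>"
    by (simp add: max_def)
  finally show ?thesis
    by simp
qed

lemma powr_band_error_le:
  fixes a c d u sl \<kappa> :: real
  assumes "0 < \<kappa>" "0 \<le> a" "0 \<le> c" "0 \<le> d" "0 \<le> u" "0 \<le> sl" "u powr \<kappa> = a * sl"
  shows "c * (u + 2 * d) powr \<kappa> \<le> c * 3 powr \<kappa> * (1 + a) * (d powr \<kappa> + sl)"
proof -
  have "c * (u + 2 * d) powr \<kappa> \<le> c * (3 powr \<kappa> * (a * sl + d powr \<kappa>))"
    using assms powr_add_twice_le[of u d \<kappa>] by (intro mult_left_mono) auto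
  also have "\<dots> \<le> c * (3 powr \<kappa> * ((1 + a) * (d powr \<kappa> + sl)))"
  proof (intro mult_left_mono)
    have "0 \<le> a * d powr \<kappa>"
      using assms by simp
    then show "a * sl + d powr \<kappa> \<le> (1 + a) * (d powr \<kappa> + sl)"
      using assms by (simp add: distrib_left distrib_right)
  qed (use assms in auto)
  finally show ?thesis
    by (simp only: mult.assoc)
qed

lemma two_exp_tail_le_powr:
  fixes n :: nat and r :: real
  assumes "2 \<le> n" "0 \<le> r"
  shows "2 * exp (- (2 * n * (sqrt ((r + 1) / 2) * sqrt (ln n / n))\<^sup>2)) \<le> n powr - r"
proof -
  have "(sqrt ((r + 1) / 2) * sqrt (ln n / n))\<^sup>2 = (r + 1) * ln n / (2 * n)"
    using assms by (simp add: power_mult_distrib)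
  then have "2 * n * (sqrt ((r + 1) / 2) * sqrt (ln n / n))\<^sup>2 = (r + 1) * ln n"
    using assms by simp
  then have "2 * exp (- (2 * n * (sqrt ((r + 1) / 2) * sqrt (ln n / n))\<^sup>2)) = 2 * exp (- ((r + 1) * ln n))"
    by (simp only:)
  also have "\<dots> = 2 * n powr - (r + 1)"
    using assms by (simp add: powr_def algebra_simps)
  also have "\<dots> = n powr - r * (2 / n)"
    using assms by (simp add: powr_diff powr_minus divide_simps)
  also have "\<dots> \<le> n powr - r"
    using assms by (intro mult_left_le) auto
  finally show ?thesis .
qed

section \<open>Concentration of empirical frequencies\<close>

lemma measure_pair_Times_ge:
  assumes "prob_space M1" "prob_space M2" "A \<in> sets M1" "B \<in> sets M2"
    and "1 - a \<le> measure M1 A" "1 - b \<le> measure M2 B"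
  shows "1 - a - b \<le> measure (M1 \<Otimes>\<^sub>M M2) (A \<times> B)"
proof -
  interpret M2: prob_space M2
    by fact
  have "emeasure (M1 \<Otimes>\<^sub>M M2) (A \<times> B) = emeasure M1 A * emeasure M2 B"
    using assms by (intro M2.emeasure_pair_measure_Times)
  then have "measure (M1 \<Otimes>\<^sub>M M2) (A \<times> B) = measure M1 A * measure M2 B"
    by (simp add: measure_def enn2real_mult)
  moreover have "(1 - measure M1 A) * (1 - measure M2 B) \<ge> 0"
    using assms prob_space.prob_le_1 by (intro mult_nonneg_nonneg) auto
  ultimately show ?thesis
    using assms(5,6) by (simp add: algebra_simps)
qed

lemma (in prob_space) prob_ge_union_bound_AE:
  assumes "G \<in> events" "B1 \<in> events" "B2 \<in> events"
    and "AE x in M. x \<in> G \<or> x \<in> B1 \<or> x \<in> B2"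
  shows "1 - prob B1 - prob B2 \<le> prob G"
proof -
  have "1 \<le> prob (G \<union> B1 \<union> B2)"
    using assms by (subst prob_space[symmetric], intro finite_measure_mono_AE) auto
  also have "\<dots> \<le> prob G + prob B1 + prob B2"
    using assms measure_Un_le[of "G \<union> B1" M B2] measure_Un_le[of G M B1] by auto
  finally show ?thesis
    by simp
qed

lemma indep_vars_PiM_coordinates:
  assumes "prob_space N" "I \<noteq> {}"
  shows "prob_space.indep_vars (PiM I (\<lambda>_. N)) (\<lambda>_. N) (\<lambda>i \<omega>. \<omega> i) I"
proof -
  have PiM: "prob_space (PiM I (\<lambda>_. N))"
    using assms by (intro prob_space_PiM) auto
  have "distr (PiM I (\<lambda>_. N)) (PiM I (\<lambda>_. N)) (\<lambda>\<omega>. restrict \<omega> I)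
      = distr (PiM I (\<lambda>_. N)) (PiM I (\<lambda>_. N)) (\<lambda>\<omega>. \<omega>)"
    by (rule distr_cong) (auto simp: space_PiM PiE_def extensional_restrict)
  also have "\<dots> = PiM I (\<lambda>_. N)"
    by (rule distr_id)
  also have "\<dots> = PiM I (\<lambda>i. distr (PiM I (\<lambda>_. N)) N (\<lambda>\<omega>. \<omega> i))"
    using assms distr_PiM_component[of I "\<lambda>_. N"] by (intro PiM_cong) auto
  finally show ?thesis
    by (subst prob_space.indep_vars_iff_distr_eq_PiM'[OF PiM assms(2)]) auto
qed

lemma card_eq_sum_indicator:
  fixes n :: nat
  shows "real (card {i. i < n \<and> Z i \<in> A}) = (\<Sum>i<n. indicator A (Z i))"
proof -
  have "(\<Sum>i<n. indicator A (Z i) :: real) = (\<Sum>i<n. if i \<in> Z -` A then 1 else 0)"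
    by (intro sum.cong) (auto simp: indicator_def)
  also have "\<dots> = (\<Sum>i\<in>{..<n} \<inter> Z -` A. 1)"
    by (rule sum.inter_restrict[symmetric]) simp
  also have "{..<n} \<inter> Z -` A = {i. i < n \<and> Z i \<in> A}"
    by auto
  finally show ?thesis
    by simp
qed

lemma
  fixes n :: nat
  assumes N: "prob_space N" and A: "A \<in> sets N" and "0 < n" "0 \<le> \<epsilon>"
  defines "Pn \<equiv> PiM {..<n} (\<lambda>_. N)"
  shows PiM_count_lower_tail:
      "measure Pn {Z \<in> space Pn. card {i. i < n \<and> Z i \<in> A} \<le> n * measure N A - \<epsilon>} \<le> exp (-2 * \<epsilon>\<^sup>2 / n)"
    and PiM_count_upper_tail:
      "measure Pn {Z \<in> space Pn. n * measure N A + \<epsilon> \<le> card {i. i < n \<and> Z i \<in> A}} \<le> exp (-2 * \<epsilon>\<^sup>2 / n)"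
proof -
  have Pn: "prob_space Pn"
    unfolding Pn_def using N by (intro prob_space_PiM) auto
  have indep: "prob_space.indep_vars Pn (\<lambda>_. borel) (\<lambda>i Z. indicator A (Z i) :: real) {..<n}"
    unfolding Pn_def using A \<open>0 < n\<close>
    by (intro prob_space.indep_vars_compose2[OF _ indep_vars_PiM_coordinates[OF N]])
       (auto intro: Pn[unfolded Pn_def])
  have mean: "prob_space.expectation Pn (\<lambda>Z. indicator A (Z i) :: real) = measure N A" if "i < n" for i
  proof -
    have "prob_space.expectation Pn (\<lambda>Z. indicator A (Z i) :: real)
        = integral\<^sup>L (distr Pn N (\<lambda>Z. Z i)) (indicator A)"
      unfolding Pn_def using that A by (intro integral_distr[symmetric]) auto
    also have "distr Pn N (\<lambda>Z. Z i) = N"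
      unfolding Pn_def using distr_PiM_component[of "{..<n}" "\<lambda>_. N" i] N that by simp
    finally show ?thesis
      using A N by (simp add: prob_space.finite_measure finite_measure.emeasure_finite)
  qed
  interpret Hoeffding_ineq Pn "{..<n}" "\<lambda>i Z. indicator A (Z i)" "\<lambda>_. 0" "\<lambda>_. 1" "n * measure N A"
  proof -
    show "Hoeffding_ineq Pn {..<n} (\<lambda>i Z. indicator A (Z i)) (\<lambda>_. 0) (\<lambda>_. 1)"
      unfolding Hoeffding_ineq_def indep_interval_bounded_random_variables_def
        indep_interval_bounded_random_variables_axioms_def
      using Pn indep by (auto intro!: AE_I2 simp: indicator_def)
    show "n * measure N A \<equiv> (\<Sum>i<n. prob_space.expectation Pn (\<lambda>Z. indicator A (Z i)))"
      using mean by simp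
  qed
  show "measure Pn {Z \<in> space Pn. card {i. i < n \<and> Z i \<in> A} \<le> n * measure N A - \<epsilon>} \<le> exp (-2 * \<epsilon>\<^sup>2 / n)"
    using Hoeffding_ineq_le[OF \<open>0 \<le> \<epsilon>\<close>] \<open>0 < n\<close> by (simp add: card_eq_sum_indicator)
  show "measure Pn {Z \<in> space Pn. n * measure N A + \<epsilon> \<le> card {i. i < n \<and> Z i \<in> A}} \<le> exp (-2 * \<epsilon>\<^sup>2 / n)"
    using Hoeffding_ineq_ge[OF \<open>0 \<le> \<epsilon>\<close>] \<open>0 < n\<close> by (simp add: card_eq_sum_indicator)
qed

lemma PiM_count_bracket_event:
  fixes n k :: nat and s :: real
  assumes N: "prob_space N" and sets: "A1 \<in> sets N" "A2 \<in> sets N" "X \<in> sets N"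
    and AE_X: "AE x in N. x \<in> X" and "0 < n" "0 \<le> s"
    and k_lower: "real k \<le> n * (measure N A1 - s)"
    and k_upper: "n * (measure N A2 + s) \<le> real k"
  defines "Pn \<equiv> PiM {..<n} (\<lambda>_. N)"
    and "G \<equiv> {Z \<in> space (PiM {..<n} (\<lambda>_. N)). (\<forall>i<n. Z i \<in> X) \<and>
      k \<le> card {i. i < n \<and> Z i \<in> A1} \<and> card {i. i < n \<and> Z i \<in> A2} < k}"
  shows "G \<in> sets Pn" "1 - 2 * exp (- (2 * n * s\<^sup>2)) \<le> measure Pn G"
proof -
  interpret Pn: prob_space Pn
    unfolding Pn_def using N by (intro prob_space_PiM) auto
  have "G = {Z \<in> space Pn. (\<forall>i\<in>{..<n}. Z i \<in> X) \<and> real k \<le> (\<Sum>i<n. indicator A1 (Z i))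
      \<and> (\<Sum>i<n. indicator A2 (Z i)) < real k}"
    unfolding G_def Pn_def card_eq_sum_indicator[symmetric] by auto
  also have "\<dots> \<in> sets Pn"
    unfolding Pn_def using sets by measurable
  finally show G: "G \<in> sets Pn" .
  define B1 where "B1 = {Z \<in> space Pn. card {i. i < n \<and> Z i \<in> A1} \<le> n * measure N A1 - n * s}"
  define B2 where "B2 = {Z \<in> space Pn. n * measure N A2 + n * s \<le> card {i. i < n \<and> Z i \<in> A2}}"
  have tail: "exp (-2 * (n * s)\<^sup>2 / n) = exp (- (2 * n * s\<^sup>2))"
    using \<open>0 < n\<close> by (simp add: power2_eq_square)
  have B1: "B1 \<in> sets Pn"
    unfolding B1_def Pn_def card_eq_sum_indicator using sets(1) by measurable
  have B2: "B2 \<in> sets Pn"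
    unfolding B2_def Pn_def card_eq_sum_indicator using sets(2) by measurable
  have B1_prob: "Pn.prob B1 \<le> exp (- (2 * n * s\<^sup>2))"
    using PiM_count_lower_tail[OF N sets(1) \<open>0 < n\<close>, of "n * s", unfolded tail] \<open>0 \<le> s\<close>
    unfolding B1_def Pn_def by simp
  have B2_prob: "Pn.prob B2 \<le> exp (- (2 * n * s\<^sup>2))"
    using PiM_count_upper_tail[OF N sets(2) \<open>0 < n\<close>, of "n * s", unfolded tail] \<open>0 \<le> s\<close>
    unfolding B2_def Pn_def by simp
  have "AE Z in Pn. \<forall>i\<in>{..<n}. Z i \<in> X"
    unfolding Pn_def using N AE_X by (intro eventually_ball_finite ballI AE_PiM_component) auto
  then have "AE Z in Pn. Z \<in> G \<or> Z \<in> B1 \<or> Z \<in> B2"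
  proof (rule AE_mp, intro AE_I2 impI)
    fix Z assume "Z \<in> space Pn" "\<forall>i\<in>{..<n}. Z i \<in> X"
    then show "Z \<in> G \<or> Z \<in> B1 \<or> Z \<in> B2"
      using k_lower k_upper by (auto simp: G_def B1_def B2_def Pn_def algebra_simps)
  qed
  then show "1 - 2 * exp (- (2 * n * s\<^sup>2)) \<le> Pn.prob G"
    using Pn.prob_ge_union_bound_AE[OF G B1 B2] B1_prob B2_prob by linarith
qed

lemma sets_marginal [simp]: "sets (marginal M) = sets borel"
  by (simp add: marginal_def)

lemma space_marginal [simp]: "space (marginal M) = UNIV"
  by (simp add: marginal_def)

lemma measurable_marginal [simp]: "measurable (marginal M) N = measurable borel N"
  by (rule measurable_cong_sets) simp_all

lemma
  assumes M: "prob_space M" "sets M = sets (borel \<Otimes>\<^sub>M count_space UNIV)"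
  shows prob_space_marginal: "prob_space (marginal M)"
    and null_sets_marginal_compl:
      "X \<in> sets borel \<Longrightarrow> emeasure M (X \<times> UNIV) = 1 \<Longrightarrow> UNIV - X \<in> null_sets (marginal M)"
proof -
  interpret M: prob_space M
    by (fact M(1))
  have fst: "fst \<in> measurable M borel"
    by (subst measurable_cong_sets[OF M(2) refl]) (rule measurable_fst)
  then show "prob_space (marginal M)"
    unfolding marginal_def by (rule M.prob_space_distr)
  assume X: "X \<in> sets borel" "emeasure M (X \<times> UNIV) = 1"
  have space: "space M = UNIV"
    using sets_eq_imp_space_eq[OF M(2)] by (simp add: space_pair_measure)
  have XU: "X \<times> UNIV \<in> M.events"
    using X(1) M(2) by simp
  have "fst -` (UNIV - X) \<inter> space M = space M - X \<times> UNIV"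
    by (auto simp: space)
  then have "emeasure (marginal M) (UNIV - X) = emeasure M (space M - X \<times> UNIV)"
    unfolding marginal_def using X(1) fst by (subst emeasure_distr) auto
  also have "\<dots> = 0"
    using M.prob_compl[OF XU] X(2) by (simp add: M.emeasure_eq_measure)
  finally show "UNIV - X \<in> null_sets (marginal M)"
    using X(1) by (intro null_setsI) auto
qed

lemma sup_dist_less_imp:
  assumes "sup_dist X f g < ereal d" "x \<in> X"
  shows "\<bar>f x - g x\<bar> < d"
proof -
  have "ereal \<bar>f x - g x\<bar> \<le> sup_dist X f g"
    unfolding sup_dist_def using assms(2) by (rule SUP_upper)
  then have "ereal \<bar>f x - g x\<bar> < ereal d"
    using assms(1) by (rule order.strict_trans1)
  then show ?thesis
    by simp
qed

lemma accurate_good_events: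
  assumes "prob_space P" "accurate P X etahat eta \<delta> \<tau>"
  obtains (good) M where "\<And>m. M \<le> m \<Longrightarrow> \<exists>G \<in> sets (PiM {..<m} (\<lambda>_. P)).
    1 - \<tau> m \<le> measure (PiM {..<m} (\<lambda>_. P)) G \<and> (\<forall>S\<in>G. \<forall>x\<in>X. \<bar>etahat m S x - eta x\<bar> < \<delta> m)"
proof -
  obtain M where M: "\<And>m. M \<le> m \<Longrightarrow> \<exists>E \<in> sets (PiM {..<m} (\<lambda>_. P)).
      {S \<in> space (PiM {..<m} (\<lambda>_. P)). ereal (\<delta> m) \<le> sup_dist X (etahat m S) eta} \<subseteq> E
      \<and> measure (PiM {..<m} (\<lambda>_. P)) E \<le> \<tau> m"
    using assms(2) unfolding accurate_def by blast
  show thesis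
  proof (rule that)
    fix m assume "M \<le> m"
    then obtain E where E: "E \<in> sets (PiM {..<m} (\<lambda>_. P))"
      "{S \<in> space (PiM {..<m} (\<lambda>_. P)). ereal (\<delta> m) \<le> sup_dist X (etahat m S) eta} \<subseteq> E"
      "measure (PiM {..<m} (\<lambda>_. P)) E \<le> \<tau> m"
      using M by blast
    interpret Pm: prob_space "PiM {..<m} (\<lambda>_. P)"
      using assms(1) by (intro prob_space_PiM) auto
    show "\<exists>G \<in> sets (PiM {..<m} (\<lambda>_. P)).
        1 - \<tau> m \<le> measure (PiM {..<m} (\<lambda>_. P)) G \<and> (\<forall>S\<in>G. \<forall>x\<in>X. \<bar>etahat m S x - eta x\<bar> < \<delta> m)"
    proof (intro bexI conjI ballI)
      show "1 - \<tau> m \<le> Pm.prob (space (PiM {..<m} (\<lambda>_. P)) - E)"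
        using Pm.prob_compl[OF E(1)] E(3) by simp
      fix S x assume "S \<in> space (PiM {..<m} (\<lambda>_. P)) - E" "x \<in> X"
      then show "\<bar>etahat m S x - eta x\<bar> < \<delta> m"
        using E(2) by (intro sup_dist_less_imp) (auto simp: not_le)
    qed (use E(1) in auto)
  qed
qed

section \<open>The margin condition\<close>

locale margin_condition = prob_space QX for QX :: "'a measure" +
  fixes eta :: "'a \<Rightarrow> real" and t \<delta>0 b1 b2 \<kappa> :: real
  assumes space_UNIV: "space QX = UNIV"
    and eta_measurable [measurable]: "eta \<in> borel_measurable QX"
    and margin_pos: "0 < \<delta>0" "0 < b1" "0 < b2" "0 < \<kappa>"
    and margin: "\<forall>d \<in> {-\<delta>0..\<delta>0}.
      b1 * \<bar>d\<bar> powr \<kappa> \<le> \<bar>F_PQ QX eta (t + d) - F_PQ QX eta t\<bar> \<and>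
      \<bar>F_PQ QX eta (t + d) - F_PQ QX eta t\<bar> \<le> b2 * \<bar>d\<bar> powr \<kappa>"
begin

abbreviation F :: "real \<Rightarrow> real" where
  "F \<equiv> F_PQ QX eta"

lemma Collect_in_events:
  assumes "P \<in> measurable QX (count_space UNIV)"
  shows "Collect P \<in> events"
proof -
  have "{x \<in> space QX. P x} \<in> events"
    using assms by (rule predE)
  then show ?thesis
    unfolding space_UNIV by simp
qed

lemma F_mono: "s \<le> s' \<Longrightarrow> F s \<le> F s'"
  unfolding F_PQ_def by (intro finite_measure_mono Collect_in_events) auto

lemma prob_eta_between: "s \<le> s' \<Longrightarrow> prob {x. s < eta x \<and> eta x \<le> s'} = F s' - F s"
proof -
  assume "s \<le> s'"
  then have "{x. s < eta x \<and> eta x \<le> s'} = {x. eta x \<le> s'} - {x. eta x \<le> s}"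
    by auto
  with \<open>s \<le> s'\<close> show ?thesis
    unfolding F_PQ_def by (simp add: finite_measure_Diff Collect_in_events subset_eq)
qed

lemma F_margin_right:
  assumes "0 \<le> d" "d \<le> \<delta>0"
  shows "b1 * d powr \<kappa> \<le> F (t + d) - F t" "F (t + d) - F t \<le> b2 * d powr \<kappa>"
  using margin[rule_format, of d] F_mono[of t "t + d"] assms by auto

lemma F_margin_left:
  assumes "0 \<le> d" "d \<le> \<delta>0"
  shows "b1 * d powr \<kappa> \<le> F t - F (t - d)" "F t - F (t - d) \<le> b2 * d powr \<kappa>"
  using margin[rule_format, of "-d"] F_mono[of "t - d" t] assms by auto

lemma prob_eta_eq_threshold: "prob {x. eta x = t} = 0"
proof -
  have "prob {x. eta x = t} \<le> b2 * d powr \<kappa>" if "0 < d" "d \<le> \<delta>0" for d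
  proof -
    have "prob {x. eta x = t} \<le> prob {x. t - d < eta x \<and> eta x \<le> t}"
      using that by (intro finite_measure_mono Collect_in_events) auto
    also have "\<dots> \<le> b2 * d powr \<kappa>"
      using that prob_eta_between[of "t - d" t] F_margin_left(2)[of d] by simp
    finally show ?thesis .
  qed
  then have "\<forall>\<^sub>F d in at_right 0. prob {x. eta x = t} \<le> b2 * d powr \<kappa>"
    unfolding eventually_at_right_field using margin_pos(1) by (intro exI[of _ \<delta>0]) auto
  then have "prob {x. eta x = t} \<le> 0"
    using tendsto_lowerbound[OF powr_tendsto_zero_at_right[OF margin_pos(4)]] by simp
  then show ?thesis
    using measure_nonneg[of QX "{x. eta x = t}"] by linarith
qed

lemma F_threshold: "F t = 1 - prob {x. t \<le> eta x}"
proof -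
  have "{x. eta x \<le> t} = {x. eta x < t} \<union> {x. eta x = t}"
    by auto
  moreover have "{x. eta x = t} \<in> null_sets QX"
    using prob_eta_eq_threshold by (intro null_setsI Collect_in_events) (auto simp: emeasure_eq_measure)
  ultimately have "F t = prob {x. eta x < t}"
    unfolding F_PQ_def by (simp add: measure_Un_null_set Collect_in_events)
  also have "{x. eta x < t} = space QX - {x. t \<le> eta x}"
    by (auto simp: space_UNIV)
  finally show ?thesis
    by (simp add: prob_compl Collect_in_events)
qed

lemma prob_margin_band:
  assumes "0 \<le> h" "h \<le> \<delta>0"
  shows "prob {x. t - h < eta x \<and> eta x \<le> t + h} \<le> 2 * b2 * h powr \<kappa>"
  using prob_eta_between[of "t - h" "t + h"] F_margin_left(2)[OF assms] F_margin_right(2)[OF assms]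
    assms by simp

lemma prob_superlevel_symdiff_le:
  fixes f :: "'a \<Rightarrow> real" and Z :: "nat \<Rightarrow> 'a" and n k :: nat
  assumes null: "UNIV - X \<in> null_sets QX"
    and close: "\<forall>x\<in>X. \<bar>f x - eta x\<bar> < d" and sample: "\<forall>i<n. Z i \<in> X"
    and many_below: "k \<le> card {i. i < n \<and> eta (Z i) \<le> t + u}"
    and few_below: "card {i. i < n \<and> eta (Z i) \<le> t - u} < k"
    and "0 \<le> u" "0 \<le> d" "u + 2 * d \<le> \<delta>0"
  shows "prob (symdiff {x. kth_smallest k (map (\<lambda>i. f (Z i)) [0..<n]) \<le> f x} {x. t \<le> eta x})
    \<le> 2 * b2 * (u + 2 * d) powr \<kappa>"
proof -
  define th where "th = kth_smallest k (map (\<lambda>i. f (Z i)) [0..<n])"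
  define h where "h = u + 2 * d"
  have "\<forall>i<n. \<bar>f (Z i) - eta (Z i)\<bar> < d"
    using close sample by simp
  then have th: "t - u - d \<le> th" "th \<le> t + u + d"
    using kth_smallest_perturbed_bounds[of n "\<lambda>i. f (Z i)" "\<lambda>i. eta (Z i)" d k "t + u" "t - u"]
      many_below few_below unfolding th_def by auto
  have band: "{x. t - h < eta x \<and> eta x \<le> t + h} \<in> events"
    by (intro Collect_in_events) measurable
  have "symdiff {x. th \<le> f x} {x. t \<le> eta x} \<subseteq> {x. t - h < eta x \<and> eta x \<le> t + h} \<union> (UNIV - X)"
  proof
    fix x assume x: "x \<in> symdiff {x. th \<le> f x} {x. t \<le> eta x}"
    show "x \<in> {x. t - h < eta x \<and> eta x \<le> t + h} \<union> (UNIV - X)"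
    proof (cases "x \<in> X")
      case True
      then have "\<bar>f x - eta x\<bar> < d"
        using close by blast
      then show ?thesis
        using x th \<open>0 \<le> u\<close> unfolding symdiff_def h_def by auto
    qed simp
  qed
  then have "prob (symdiff {x. th \<le> f x} {x. t \<le> eta x})
      \<le> prob ({x. t - h < eta x \<and> eta x \<le> t + h} \<union> (UNIV - X))"
    using band null by (intro finite_measure_mono) auto
  also have "\<dots> = prob {x. t - h < eta x \<and> eta x \<le> t + h}"
    using band null by (rule measure_Un_null_set)
  also have "\<dots> \<le> 2 * b2 * h powr \<kappa>"
    using assms by (intro prob_margin_band) (auto simp: h_def)
  finally show ?thesis
    by (simp add: th_def h_def)
qed

lemma sample_bracket_event:
  fixes n k :: nat and s u :: real
  assumes null: "UNIV - X \<in> null_sets QX"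
    and "0 < n" "0 \<le> s" "0 \<le> u" "u \<le> \<delta>0"
    and slack: "s + 1 / n \<le> b1 * u powr \<kappa>"
    and k: "real k \<le> n * F t" "n * F t < real k + 1"
  defines "G \<equiv> {Z \<in> space (PiM {..<n} (\<lambda>_. QX)). (\<forall>i<n. Z i \<in> X) \<and>
      k \<le> card {i. i < n \<and> eta (Z i) \<le> t + u} \<and> card {i. i < n \<and> eta (Z i) \<le> t - u} < k}"
  shows "G \<in> sets (PiM {..<n} (\<lambda>_. QX))"
    and "1 - 2 * exp (- (2 * n * s\<^sup>2)) \<le> measure (PiM {..<n} (\<lambda>_. QX)) G"
proof -
  have "space QX - (UNIV - X) \<in> events"
    using null by auto
  then have X: "X \<in> events" "AE x in QX. x \<in> X"
    using AE_not_in[OF null] by (auto simp: space_UNIV Diff_Diff_Int)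
  have above: "F t + 1 / n \<le> F (t + u) - s"
    using F_margin_right(1)[of u] assms by linarith
  have below: "F (t - u) + s \<le> F t - 1 / n"
    using F_margin_left(1)[of u] assms by linarith
  have "real k \<le> n * (F t + 1 / n)"
    using k \<open>0 < n\<close> by (simp add: algebra_simps)
  also have "\<dots> \<le> n * (F (t + u) - s)"
    using above by (intro mult_left_mono) auto
  finally have k_lower: "real k \<le> n * (prob {x. eta x \<le> t + u} - s)"
    by (simp add: F_PQ_def)
  have "n * (F (t - u) + s) \<le> n * (F t - 1 / n)"
    using below by (intro mult_left_mono) auto
  also have "\<dots> \<le> real k"
    using k \<open>0 < n\<close> by (simp add: algebra_simps)
  finally have k_upper: "n * (prob {x. eta x \<le> t - u} + s) \<le> real k"
    by (simp add: F_PQ_def)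
  have G_eq: "G = {Z \<in> space (PiM {..<n} (\<lambda>_. QX)). (\<forall>i<n. Z i \<in> X) \<and>
      k \<le> card {i. i < n \<and> Z i \<in> {x. eta x \<le> t + u}} \<and> card {i. i < n \<and> Z i \<in> {x. eta x \<le> t - u}} < k}"
    unfolding G_def mem_Collect_eq ..
  have "{x. eta x \<le> c} \<in> events" for c
    by (intro Collect_in_events) auto
  note bracket = PiM_count_bracket_event[OF prob_space_axioms this this X \<open>0 < n\<close> \<open>0 \<le> s\<close> k_lower k_upper]
  show "G \<in> sets (PiM {..<n} (\<lambda>_. QX))"
    unfolding G_eq by (rule bracket(1))
  show "1 - 2 * exp (- (2 * n * s\<^sup>2)) \<le> measure (PiM {..<n} (\<lambda>_. QX)) G"
    unfolding G_eq by (rule bracket(2))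
qed

lemma plugin_threshold_event:
  fixes PS :: "'b measure" and f :: "'b \<Rightarrow> 'a \<Rightarrow> real" and n k :: nat and s u d \<tau> :: real
  assumes PS: "prob_space PS" and Good: "Good \<in> sets PS" "1 - \<tau> \<le> measure PS Good"
    and close: "\<forall>S\<in>Good. \<forall>x\<in>X. \<bar>f S x - eta x\<bar> < d"
    and null: "UNIV - X \<in> null_sets QX"
    and "0 < n" "0 \<le> s" "0 \<le> u" "0 \<le> d" "u + 2 * d \<le> \<delta>0"
    and slack: "s + 1 / n \<le> b1 * u powr \<kappa>"
    and k: "real k \<le> n * F t" "n * F t < real k + 1"
  shows "\<exists>E \<in> sets (PS \<Otimes>\<^sub>M PiM {..<n} (\<lambda>_. QX)).
    E \<subseteq> {(S, Z) \<in> space (PS \<Otimes>\<^sub>M PiM {..<n} (\<lambda>_. QX)).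
      prob (symdiff {x. kth_smallest k (map (\<lambda>i. f S (Z i)) [0..<n]) \<le> f S x} {x. t \<le> eta x})
        \<le> 2 * b2 * (u + 2 * d) powr \<kappa>}
    \<and> 1 - \<tau> - 2 * exp (- (2 * n * s\<^sup>2)) \<le> measure (PS \<Otimes>\<^sub>M PiM {..<n} (\<lambda>_. QX)) E"
proof -
  define G where "G = {Z \<in> space (PiM {..<n} (\<lambda>_. QX)). (\<forall>i<n. Z i \<in> X) \<and>
      k \<le> card {i. i < n \<and> eta (Z i) \<le> t + u} \<and> card {i. i < n \<and> eta (Z i) \<le> t - u} < k}"
  have "u \<le> \<delta>0"
    using assms by linarith
  note G = sample_bracket_event[OF null \<open>0 < n\<close> \<open>0 \<le> s\<close> \<open>0 \<le> u\<close> this slack k, folded G_def]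
  have "Good \<times> G \<subseteq> {(S, Z) \<in> space (PS \<Otimes>\<^sub>M PiM {..<n} (\<lambda>_. QX)).
      prob (symdiff {x. kth_smallest k (map (\<lambda>i. f S (Z i)) [0..<n]) \<le> f S x} {x. t \<le> eta x})
        \<le> 2 * b2 * (u + 2 * d) powr \<kappa>}"
  proof safe
    fix S Z assume "S \<in> Good" "Z \<in> G"
    then show "(S, Z) \<in> space (PS \<Otimes>\<^sub>M PiM {..<n} (\<lambda>_. QX))"
      using Good(1) sets.sets_into_space by (auto simp: G_def space_pair_measure)
    show "prob (symdiff {x. kth_smallest k (map (\<lambda>i. f S (Z i)) [0..<n]) \<le> f S x} {x. t \<le> eta x})
        \<le> 2 * b2 * (u + 2 * d) powr \<kappa>"
      using \<open>S \<in> Good\<close> \<open>Z \<in> G\<close> close assms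
      by (intro prob_superlevel_symdiff_le[OF null]) (auto simp: G_def)
  qed
  moreover have "Good \<times> G \<in> sets (PS \<Otimes>\<^sub>M PiM {..<n} (\<lambda>_. QX))"
    using Good(1) G(1) by (rule pair_measureI)
  moreover have "1 - \<tau> - 2 * exp (- (2 * n * s\<^sup>2)) \<le> measure (PS \<Otimes>\<^sub>M PiM {..<n} (\<lambda>_. QX)) (Good \<times> G)"
    using PS Good G prob_space_axioms by (intro measure_pair_Times_ge prob_space_PiM) auto
  ultimately show ?thesis
    by blast
qed

lemma plugin_threshold_uniform_rate:
  fixes r :: real
  assumes "0 < r" and null: "UNIV - X \<in> null_sets QX"
  obtains (rate) c N where "0 < c"
    and "\<And>n d (PS :: 'b measure) Good \<tau> f k. N \<le> n \<Longrightarrow> 0 \<le> d \<Longrightarrow> d \<le> \<delta>0 / 3 \<Longrightarrow>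
      prob_space PS \<Longrightarrow> Good \<in> sets PS \<Longrightarrow> 1 - \<tau> \<le> measure PS Good \<Longrightarrow>
      \<forall>S\<in>Good. \<forall>x\<in>X. \<bar>f S x - eta x\<bar> < d \<Longrightarrow> real k \<le> n * F t \<Longrightarrow> n * F t < real k + 1 \<Longrightarrow>
      \<exists>E \<in> sets (PS \<Otimes>\<^sub>M PiM {..<n} (\<lambda>_. QX)).
        E \<subseteq> {(S, Z) \<in> space (PS \<Otimes>\<^sub>M PiM {..<n} (\<lambda>_. QX)).
          prob (symdiff {x. kth_smallest k (map (\<lambda>i. f S (Z i)) [0..<n]) \<le> f S x} {x. t \<le> eta x})
            \<le> c * (d powr \<kappa> + sqrt (ln n / n))}
        \<and> 1 - \<tau> - n powr - r \<le> measure (PS \<Otimes>\<^sub>M PiM {..<n} (\<lambda>_. QX)) E"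
proof -
  define \<rho> where "\<rho> = sqrt ((r + 1) / 2)"
  define a where "a = (\<rho> + 1) / b1"
  \<comment> \<open>\<open>b1 * u n powr \<kappa>\<close> dominates the Hoeffding deviation \<open>\<rho> * sqrt (ln n / n)\<close> plus the
    rounding error \<open>1 / n\<close> of the order-statistic index\<close>
  define u where "u n = (a * sqrt (ln n / n)) powr (1 / \<kappa>)" for n :: nat
  have \<rho>: "0 \<le> \<rho>" and a: "0 \<le> a"
    using \<open>0 < r\<close> margin_pos by (simp_all add: \<rho>_def a_def)
  obtain N0 where N0: "\<And>n. N0 \<le> n \<Longrightarrow> u n < \<delta>0 / 3"
    using order_tendstoD(2)[OF sqrt_ln_over_powr_tendsto_zero[OF margin_pos(4) a], of "\<delta>0 / 3"]
      margin_pos(1) unfolding eventually_sequentially u_def by auto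
  show thesis
  proof (rule that)
    show "0 < 2 * b2 * 3 powr \<kappa> * (1 + a)"
      using margin_pos a by simp
    fix n d and PS :: "'b measure" and Good \<tau> f k
    assume n: "max N0 3 \<le> n" and d: "0 \<le> d" "d \<le> \<delta>0 / 3"
      and PS: "prob_space PS" and Good: "Good \<in> sets PS" "1 - \<tau> \<le> measure PS Good"
      and close: "\<forall>S\<in>Good. \<forall>x\<in>X. \<bar>f S x - eta x\<bar> < d"
      and k: "real k \<le> n * F t" "n * F t < real k + 1"
    define sl where "sl = sqrt (ln n / n)"
    have sl: "0 \<le> sl" "1 / n \<le> sl"
      using n inverse_le_sqrt_ln_over[of n] by (auto simp: sl_def)
    have u: "0 \<le> u n" "u n powr \<kappa> = a * sl"
      using margin_pos sl a by (auto simp: u_def sl_def powr_powr)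
    have slack: "\<rho> * sl + 1 / n \<le> b1 * u n powr \<kappa>"
      using u sl margin_pos by (simp add: a_def distrib_right)
    have "u n + 2 * d \<le> \<delta>0" "0 < n" "0 \<le> \<rho> * sl"
      using N0[of n] n d \<rho> sl by auto
    then obtain E where E: "E \<in> sets (PS \<Otimes>\<^sub>M PiM {..<n} (\<lambda>_. QX))"
      "E \<subseteq> {(S, Z) \<in> space (PS \<Otimes>\<^sub>M PiM {..<n} (\<lambda>_. QX)).
          prob (symdiff {x. kth_smallest k (map (\<lambda>i. f S (Z i)) [0..<n]) \<le> f S x} {x. t \<le> eta x})
            \<le> 2 * b2 * (u n + 2 * d) powr \<kappa>}"
      "1 - \<tau> - 2 * exp (- (2 * n * (\<rho> * sl)\<^sup>2)) \<le> measure (PS \<Otimes>\<^sub>M PiM {..<n} (\<lambda>_. QX)) E"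
      using plugin_threshold_event[OF PS Good close null _ _ u(1) d(1) _ slack k] by blast
    have "2 * b2 * (u n + 2 * d) powr \<kappa> \<le> 2 * b2 * 3 powr \<kappa> * (1 + a) * (d powr \<kappa> + sl)"
      using margin_pos a d u sl by (intro powr_band_error_le) auto
    moreover have "2 * exp (- (2 * n * (\<rho> * sl)\<^sup>2)) \<le> n powr - r"
      using two_exp_tail_le_powr[of n r] n \<open>0 < r\<close> by (simp add: \<rho>_def sl_def)
    ultimately show "\<exists>E \<in> sets (PS \<Otimes>\<^sub>M PiM {..<n} (\<lambda>_. QX)).
        E \<subseteq> {(S, Z) \<in> space (PS \<Otimes>\<^sub>M PiM {..<n} (\<lambda>_. QX)).
          prob (symdiff {x. kth_smallest k (map (\<lambda>i. f S (Z i)) [0..<n]) \<le> f S x} {x. t \<le> eta x})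
            \<le> 2 * b2 * 3 powr \<kappa> * (1 + a) * (d powr \<kappa> + sqrt (ln n / n))}
        \<and> 1 - \<tau> - n powr - r \<le> measure (PS \<Otimes>\<^sub>M PiM {..<n} (\<lambda>_. QX)) E"
      using E unfolding sl_def by (intro bexI[OF _ E(1)]) fastforce
  qed
qed

lemma plugin_level_set_rate:
  fixes PS :: "nat \<Rightarrow> 'b measure" and f :: "nat \<Rightarrow> 'b \<Rightarrow> 'a \<Rightarrow> real"
    and \<delta> \<tau> :: "nat \<Rightarrow> real" and r \<alpha> :: real
  assumes "0 < r" and null: "UNIV - X \<in> null_sets QX"
    and Ft: "F t = 1 - \<alpha>" "\<alpha> \<le> 1"
    and PS: "\<And>m. prob_space (PS m)"
    and \<delta>: "\<And>m. 0 < \<delta> m" "\<delta> \<longlonglongrightarrow> 0"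
    and good: "\<And>m. M0 \<le> m \<Longrightarrow> \<exists>G \<in> sets (PS m).
      1 - \<tau> m \<le> measure (PS m) G \<and> (\<forall>S\<in>G. \<forall>x\<in>X. \<bar>f m S x - eta x\<bar> < \<delta> m)"
  shows "\<exists>c>0. \<exists>M N. \<forall>m\<ge>M. \<forall>n\<ge>N.
     \<exists>E \<in> sets (PS m \<Otimes>\<^sub>M PiM {..<n} (\<lambda>_. QX)).
       E \<subseteq> {(S, Z) \<in> space (PS m \<Otimes>\<^sub>M PiM {..<n} (\<lambda>_. QX)).
               prob
                 (symdiff
                   {x. f m S x \<ge> kth_smallest (nat \<lfloor>real n * (1 - \<alpha>)\<rfloor>)
                                          (map (\<lambda>i. f m S (Z i)) [0..<n])}
                   {x. eta x \<ge> t})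
               \<le> c * (\<delta> m powr \<kappa> + sqrt (ln (real n) / real n))}
       \<and> measure (PS m \<Otimes>\<^sub>M PiM {..<n} (\<lambda>_. QX)) E
           \<ge> 1 - \<tau> m - real n powr (- r)"
  using \<open>0 < r\<close> null
proof (cases rule: plugin_threshold_uniform_rate[where 'b = 'b])
  case (rate c N)
  obtain M1 where M1: "\<And>m. M1 \<le> m \<Longrightarrow> \<delta> m < \<delta>0 / 3"
    using order_tendstoD(2)[OF \<delta>(2), of "\<delta>0 / 3"] margin_pos(1)
    unfolding eventually_sequentially by auto
  have k: "real (nat \<lfloor>n * (1 - \<alpha>)\<rfloor>) \<le> n * F t" "n * F t < real (nat \<lfloor>n * (1 - \<alpha>)\<rfloor>) + 1"
    for n :: nat
  proof -
    have "real (nat \<lfloor>n * (1 - \<alpha>)\<rfloor>) = \<lfloor>n * (1 - \<alpha>)\<rfloor>"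
      using Ft(2) by simp
    then show "real (nat \<lfloor>n * (1 - \<alpha>)\<rfloor>) \<le> n * F t" "n * F t < real (nat \<lfloor>n * (1 - \<alpha>)\<rfloor>) + 1"
      unfolding Ft(1) by linarith+
  qed
  show ?thesis
  proof (rule exI[of _ c], rule conjI[OF \<open>0 < c\<close>], rule exI[of _ "max M0 M1"], rule exI[of _ N],
      intro allI impI)
    fix m n assume "max M0 M1 \<le> m" "N \<le> n"
    then show "\<exists>E \<in> sets (PS m \<Otimes>\<^sub>M PiM {..<n} (\<lambda>_. QX)).
       E \<subseteq> {(S, Z) \<in> space (PS m \<Otimes>\<^sub>M PiM {..<n} (\<lambda>_. QX)).
               prob
                 (symdiff
                   {x. f m S x \<ge> kth_smallest (nat \<lfloor>real n * (1 - \<alpha>)\<rfloor>)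
                                          (map (\<lambda>i. f m S (Z i)) [0..<n])}
                   {x. eta x \<ge> t})
               \<le> c * (\<delta> m powr \<kappa> + sqrt (ln (real n) / real n))}
       \<and> measure (PS m \<Otimes>\<^sub>M PiM {..<n} (\<lambda>_. QX)) E
           \<ge> 1 - \<tau> m - real n powr (- r)"
      using good[of m] M1[of m] \<delta>(1)[of m] PS[of m] k by (auto intro!: rate(2))
  qed
qed

end

theorem theorem2:
  fixes \<X> :: "'a::euclidean_space set"
    and P Q :: "('a \<times> bool) measure"
    and \<alpha> :: real
    and eta :: "'a \<Rightarrow> real"
    and etahat :: "nat \<Rightarrow> (nat \<Rightarrow> 'a \<times> bool) \<Rightarrow> 'a \<Rightarrow> real"
    and \<delta> \<tau> :: "nat \<Rightarrow> real"
    and t \<delta>0 b1 b2 \<kappa> :: real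
  assumes X_compact: "compact \<X>"
    and alpha: "0 < \<alpha>" "\<alpha> < 1"
    and P_prob: "prob_space P" "sets P = sets (borel \<Otimes>\<^sub>M count_space UNIV)" "emeasure P (\<X> \<times> UNIV) = 1"
    and Q_prob: "prob_space Q" "sets Q = sets (borel \<Otimes>\<^sub>M count_space UNIV)" "emeasure Q (\<X> \<times> UNIV) = 1"
    and eta_P: "is_regression_fn P eta"
    and delta_seq: "\<forall>m. 0 < \<delta> m" "\<delta> \<longlonglongrightarrow> 0"
    and tau_seq: "\<forall>m. 0 < \<tau> m" "\<tau> \<longlonglongrightarrow> 0"
    and etahat_meas: "\<forall>m S. etahat m S \<in> borel_measurable borel"
    and accurate: "accurate P \<X> etahat eta \<delta> \<tau>"
    and A: "0 < t" "t \<le> 1" "measure (marginal Q) {x. eta x \<ge> t} = \<alpha>"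
    and B: "0 < \<delta>0" "0 < b1" "0 < b2" "0 < \<kappa>"
       "\<forall>d \<in> {-\<delta>0..\<delta>0}.
          b1 * \<bar>d\<bar> powr \<kappa> \<le> \<bar>F_PQ (marginal Q) eta (t + d) - F_PQ (marginal Q) eta t\<bar> \<and>
          \<bar>F_PQ (marginal Q) eta (t + d) - F_PQ (marginal Q) eta t\<bar> \<le> b2 * \<bar>d\<bar> powr \<kappa>"
    and C: "msupport (marginal Q) \<subseteq> msupport (marginal P)"
  shows "\<forall>r>0. \<exists>c>0. \<exists>M N. \<forall>m\<ge>M. \<forall>n\<ge>N.
     \<exists>E \<in> sets (PiM {..<m} (\<lambda>_. P) \<Otimes>\<^sub>M PiM {..<n} (\<lambda>_. marginal Q)).
       E \<subseteq> {(S, Z) \<in> space (PiM {..<m} (\<lambda>_. P) \<Otimes>\<^sub>M PiM {..<n} (\<lambda>_. marginal Q)).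
               measure (marginal Q)
                 (symdiff
                   {x. etahat m S x \<ge> kth_smallest (nat \<lfloor>real n * (1 - \<alpha>)\<rfloor>)
                                          (map (\<lambda>i. etahat m S (Z i)) [0..<n])}
                   {x. eta x \<ge> t})
               \<le> c * (\<delta> m powr \<kappa> + sqrt (ln (real n) / real n))}
       \<and> measure (PiM {..<m} (\<lambda>_. P) \<Otimes>\<^sub>M PiM {..<n} (\<lambda>_. marginal Q)) E
           \<ge> 1 - \<tau> m - real n powr (- r)"
proof -
  interpret margin_condition "marginal Q" eta t \<delta>0 b1 b2 \<kappa>
    using prob_space_marginal[OF Q_prob(1,2)] eta_P B unfolding is_regression_fn_def
    by (intro margin_condition.intro margin_condition_axioms.intro) simp_all
  have Ft: "F t = 1 - \<alpha>"
    using F_threshold A(3) by simp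
  have null: "UNIV - \<X> \<in> null_sets (marginal Q)"
    using null_sets_marginal_compl[OF Q_prob(1,2)] Q_prob(3) X_compact by (simp add: compact_imp_closed)
  show ?thesis
    using P_prob(1) accurate
  proof (cases rule: accurate_good_events)
    case (good M0)
    show ?thesis
      using alpha P_prob(1) delta_seq good
      by (intro allI impI plugin_level_set_rate[where PS = "\<lambda>m. PiM {..<m} (\<lambda>_. P)", OF _ null Ft])
         (auto intro: prob_space_PiM)
  qed
qed

end
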